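(* Let $L$ and $N$ be positive integers with $N\le L$, and let $U$ be real with $L > \frac{8}{U}$. Consider the Lieb-Wu equations with one down spin in the unknowns $k_1,\dots,k_N$ and $\Lambda$: $$e^{i k_j L} = \frac{\Lambda - \sin k_j - iU/4}{\Lambda - \sin k_j + iU/4},\quad j=1,\dots,N,\qquad \prod_{j=1}^N \frac{\Lambda - \sin k_j - iU/4}{\Lambda - \sin k_j + iU/4} = 1.$$ Then there are precisely $\binom{L}{N}(N-1)$ solutions with all $k_j$ real. More precisely, to every choice of $N$ mutually distinct intervals $\mathcal{I}_j = [(\ell_j-1)\frac{2\pi}{L}, \ell_j\frac{2\pi}{L}]$, $j=1,\dots,N$, with $\ell_j\in\{1,\dots,L\}$ and $\ell_j\ne\ell_k$ for $j\neq k$, there correspond exactly $N-1$ solutions with $k_j\in\mathcal{I}_j$ for all $j$, and these solutions are characterized by $N-1$ different values of $\Lambda$.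
   Context: Solutions are counted modulo permutations of the $k_j$, with the $k_j$ required to be mutually distinct and taken in $[0,2\pi)$ (they matter only modulo $2\pi$), and with $\Lambda$ a finite real number ($\Lambda=\pm\infty$ excluded). *)

theory Defs
  imports Complex_Main
begin

definition LW_factor :: "real \<Rightarrow> real \<Rightarrow> real \<Rightarrow> complex" where
  "LW_factor U Lam k =
     (complex_of_real (Lam - sin k) - \<i> * complex_of_real (U / 4)) /
     (complex_of_real (Lam - sin k) + \<i> * complex_of_real (U / 4))"

text \<open>Real solutions, counted modulo permutations of the k_j: a solution is the
  set K of the N mutually distinct momenta (taken in [0, 2pi)) together with a
  finite real Lambda.\<close>
definition LW_solutions :: "nat \<Rightarrow> nat \<Rightarrow> real \<Rightarrow> (real set \<times> real) set" where
  "LW_solutions L N U =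
     {(K, Lam). finite K \<and> card K = N \<and> K \<subseteq> {0..<2*pi} \<and>
        (\<forall>k\<in>K. exp (\<i> * complex_of_real (k * real L)) = LW_factor U Lam k) \<and>
        (\<Prod>k\<in>K. LW_factor U Lam k) = 1}"

definition LW_interval :: "nat \<Rightarrow> nat \<Rightarrow> real set" where
  "LW_interval L l = {(real l - 1) * (2*pi / real L) .. real l * (2*pi / real L)}"

definition LW_solutions_in :: "nat \<Rightarrow> nat \<Rightarrow> real \<Rightarrow> nat set \<Rightarrow> (real set \<times> real) set" where
  "LW_solutions_in L N U S =
     {(K, Lam) \<in> LW_solutions L N U.
        \<exists>f. bij_betw f K S \<and> (\<forall>k\<in>K. k \<in> LW_interval L (f k))}"

end

theory Submission
  imports Defs "HOL-Analysis.Complex_Transcendental"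
begin

(*
  Write the right-hand side as LW_factor U Lam k = -exp (i phase (Lam - sin k)) with
  phase x = 2 arctan (4x/U), which takes values in (-pi, pi). The k-equation then says that
  the counting function z(k) = kL - phase (Lam - sin k) is an odd multiple of pi. Because
  |phase'| <= 8/U < L, z is strictly increasing, and on I_l it can only take the value
  (2l - 1) pi. Hence for every Lam each interval I_l carries exactly one admissible momentum
  k_l(Lam), which depends continuously and increasingly on Lam. Given the k-equations, the
  product equation reads exp (i L sum k_j) = 1, i.e. (L / 2pi) sum_{l in S} k_l(Lam) is an
  integer. This function of Lam is a continuous increasing bijection from the reals onto the
  open interval (sum S - N, sum S), so exactly N - 1 values of Lam solve it.
*)

lemma exp_2i_arctan:
  "exp (2 * \<i> * complex_of_real (arctan t)) = (1 + \<i> * t) / (1 - \<i> * t)"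
proof -
  have "1 - \<i> * t \<noteq> 0" "1 + \<i> * t \<noteq> 0" by (auto simp: complex_eq_iff)
  moreover have
    "2 * \<i> * complex_of_real (arctan t) = - Ln ((1 - \<i> * t) / (1 + \<i> * t))"
    by (simp add: Arctan_of_real [symmetric] Arctan_def)
  ultimately show ?thesis by (simp add: exp_minus)
qed

lemma cayley_eq_neg_exp_arctan:
  fixes a c :: real
  assumes "0 < c"
  shows "(complex_of_real a - \<i> * complex_of_real c) /
           (complex_of_real a + \<i> * complex_of_real c)
           = - exp (\<i> * complex_of_real (2 * arctan (a / c)))"
proof -
  define t where "t = a / c"
  have a: "a = t * c" using assms by (simp add: t_def)
  have "complex_of_real a + \<i> * complex_of_real c \<noteq> 0"
    and "1 - \<i> * complex_of_real t \<noteq> 0"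
    using assms by (auto simp: complex_eq_iff)
  then have "(complex_of_real a - \<i> * complex_of_real c) /
               (complex_of_real a + \<i> * complex_of_real c) = - ((1 + \<i> * t) / (1 - \<i> * t))"
    unfolding minus_divide_left
    by (subst frac_eq_eq) (auto simp: a complex_eq_iff algebra_simps)
  also have "\<dots> = - exp (\<i> * complex_of_real (2 * arctan t))"
    by (simp flip: exp_2i_arctan add: mult_ac)
  finally show ?thesis by (simp add: t_def)
qed

lemma exp_i_eq_neg_exp_i_iff:
  "exp (\<i> * complex_of_real x) = - exp (\<i> * complex_of_real y)
     \<longleftrightarrow> (\<exists>m::int. x - y = (2 * of_int m + 1) * pi)"
proof -
  have "- exp (\<i> * complex_of_real y) = exp (\<i> * complex_of_real (y + pi))"
    by (simp add: complex_eq_iff Re_exp Im_exp cos_periodic_pi sin_periodic_pi)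
  then have "exp (\<i> * complex_of_real x) = - exp (\<i> * complex_of_real y)
      \<longleftrightarrow> (\<exists>n::int. \<i> * complex_of_real x
                       = \<i> * complex_of_real (y + pi) + (of_int (2 * n) * pi) * \<i>)"
    by (simp only: exp_eq)
  also have "\<dots> \<longleftrightarrow> (\<exists>n::int. x = y + pi + of_int (2 * n) * pi)"
    by (simp add: complex_eq_iff)
  also have "\<dots> \<longleftrightarrow> (\<exists>m::int. x - y = (2 * of_int m + 1) * pi)"
    by (simp add: algebra_simps)
  finally show ?thesis .
qed

lemma exp_i_eq_1_iff_Ints: "exp (\<i> * complex_of_real x) = 1 \<longleftrightarrow> x / (2 * pi) \<in> \<int>"
  by (auto simp: exp_eq_1 Ints_def field_simps)

lemma card_Ints_preimage:
  fixes f :: "'a \<Rightarrow> real"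
  assumes "inj f" and "range f = {of_int a <..< of_int b}"
  shows "finite {x. f x \<in> \<int>} \<and> card {x. f x \<in> \<int>} = nat (b - a - 1)"
proof -
  have "f ` {x. f x \<in> \<int>} = range f \<inter> \<int>" by auto
  also have "\<dots> = of_int ` {a <..< b}" unfolding assms(2) by (auto elim!: Ints_cases)
  finally have "bij_betw f {x. f x \<in> \<int>} (of_int ` {a <..< b})"
    using assms(1) by (auto simp: bij_betw_def intro: inj_on_subset)
  moreover have "card (of_int ` {a <..< b} :: real set) = nat (b - a - 1)"
    by (simp add: card_image inj_on_def)
  ultimately show ?thesis by (simp add: bij_betw_finite bij_betw_same_card)
qed

locale lieb_wu =
  fixes L :: nat and U :: real
  assumes U_pos: "0 < U" and L_large: "8 / U < real L"
begin

lemma L_pos: "0 < real L"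
  using L_large divide_pos_pos[of 8 U] U_pos by linarith

definition phase :: "real \<Rightarrow> real" where
  "phase x = 2 * arctan (x / (U / 4))"

definition counting_fun :: "real \<Rightarrow> real \<Rightarrow> real" where
  "counting_fun Lam k = k * real L - phase (Lam - sin k)"

lemma LW_factor_eq:
  "LW_factor U Lam k = - exp (\<i> * complex_of_real (phase (Lam - sin k)))"
  unfolding LW_factor_def phase_def by (rule cayley_eq_neg_exp_arctan) (use U_pos in simp)

lemma LW_equation_iff:
  "exp (\<i> * complex_of_real (k * real L)) = LW_factor U Lam k
     \<longleftrightarrow> (\<exists>m::int. counting_fun Lam k = (2 * of_int m + 1) * pi)"
  unfolding LW_factor_eq exp_i_eq_neg_exp_i_iff counting_fun_def ..

lemma phase_bounds: "- pi < phase x" "phase x < pi"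
  unfolding phase_def using arctan_bounded[of "x / (U / 4)"] by auto

lemma strict_mono_phase: "strict_mono phase"
  using U_pos
  by (intro strict_monoI) (auto simp: phase_def intro!: arctan_monotone divide_strict_right_mono)

lemma phase_tan: "\<bar>v\<bar> < pi \<Longrightarrow> phase (U / 4 * tan (v / 2)) = v"
  unfolding phase_def using U_pos by (simp add: arctan_tan)

lemma phase_has_real_derivative:
  "(phase has_real_derivative 8 * U / (U\<^sup>2 + 16 * x\<^sup>2)) (at x)"
  unfolding phase_def using U_pos
  by (auto intro!: derivative_eq_intros simp: field_simps power2_eq_square)

lemma phase_slope_le: "8 * U / (U\<^sup>2 + 16 * x\<^sup>2) \<le> 8 / U"
proof -
  have "8 * U / (U\<^sup>2 + 16 * x\<^sup>2) \<le> 8 * U / U\<^sup>2"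
    using U_pos by (intro frac_le) auto
  then show ?thesis using U_pos by (simp add: power2_eq_square)
qed

lemma counting_fun_has_real_derivative:
  "(counting_fun Lam has_real_derivative
      real L + cos k * (8 * U / (U\<^sup>2 + 16 * (Lam - sin k)\<^sup>2))) (at k)"
proof -
  have "((\<lambda>k. k * real L) has_real_derivative real L) (at k)"
    by (auto intro!: derivative_eq_intros)
  moreover have "((\<lambda>k. phase (Lam - sin k)) has_real_derivative
          8 * U / (U\<^sup>2 + 16 * (Lam - sin k)\<^sup>2) * (0 - cos k)) (at k)"
    by (rule DERIV_chain2[OF phase_has_real_derivative]) (auto intro!: derivative_eq_intros)
  ultimately have "(counting_fun Lam has_real_derivative
      real L - 8 * U / (U\<^sup>2 + 16 * (Lam - sin k)\<^sup>2) * (0 - cos k)) (at k)"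
    unfolding counting_fun_def by (rule DERIV_diff)
  then show ?thesis by (simp add: algebra_simps)
qed

lemma strict_mono_counting_fun: "strict_mono (counting_fun Lam)"
proof (rule strict_monoI)
  fix k1 k2 :: real
  assume "k1 < k2"
  then show "counting_fun Lam k1 < counting_fun Lam k2"
  proof (rule DERIV_pos_imp_increasing)
    fix k
    define s where "s = 8 * U / (U\<^sup>2 + 16 * (Lam - sin k)\<^sup>2)"
    have "0 \<le> s" "s \<le> 8 / U"
      using U_pos phase_slope_le unfolding s_def
      by (auto intro: divide_nonneg_pos add_pos_nonneg)
    then have "- s \<le> cos k * s" using mult_right_mono[OF cos_ge_minus_one, of s k] by simp
    then have "0 < real L + cos k * s" using L_large \<open>s \<le> 8 / U\<close> by linarith
    then show "\<exists>y. DERIV (counting_fun Lam) k :> y \<and> 0 < y"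
      using counting_fun_has_real_derivative unfolding s_def by blast
  qed
qed

lemma counting_fun_antimono: "Lam1 < Lam2 \<Longrightarrow> counting_fun Lam2 k < counting_fun Lam1 k"
  unfolding counting_fun_def using strict_mono_phase by (simp add: strict_mono_less)

lemma isCont_counting_fun: "isCont (counting_fun Lam) k"
  unfolding counting_fun_def phase_def using U_pos by (intro continuous_intros) auto

lemma counting_fun_bounds:
  "k * real L - pi < counting_fun Lam k" "counting_fun Lam k < k * real L + pi"
  unfolding counting_fun_def using phase_bounds[of "Lam - sin k"] by linarith+

lemma mem_LW_interval_iff:
  "k \<in> LW_interval L l
     \<longleftrightarrow> (real l - 1) * (2 * pi) \<le> k * real L \<and> k * real L \<le> real l * (2 * pi)"
  unfolding LW_interval_def using L_pos by (simp add: pos_divide_le_eq pos_le_divide_eq)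

lemma ex1_counting_fun_in_LW_interval:
  "\<exists>!k. k \<in> LW_interval L l \<and> counting_fun Lam k = (2 * real l - 1) * pi"
proof (rule ex_ex1I)
  define a b where "a = (real l - 1) * (2 * pi / real L)" and "b = real l * (2 * pi / real L)"
  have "a * real L = (real l - 1) * (2 * pi)" "b * real L = real l * (2 * pi)"
    unfolding a_def b_def using L_pos by simp_all
  then have "counting_fun Lam a \<le> (2 * real l - 1) * pi"
    and "(2 * real l - 1) * pi \<le> counting_fun Lam b"
    using counting_fun_bounds[where k=a and Lam=Lam] counting_fun_bounds[where k=b and Lam=Lam]
    by (simp_all add: algebra_simps)
  moreover have "a \<le> b" unfolding a_def b_def using L_pos by (simp add: divide_right_mono)
  ultimately obtain k where "a \<le> k" "k \<le> b" "counting_fun Lam k = (2 * real l - 1) * pi"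
    using IVT'[of "counting_fun Lam" a _ b] isCont_counting_fun
    by (metis continuous_at_imp_continuous_on)
  then show "\<exists>k. k \<in> LW_interval L l \<and> counting_fun Lam k = (2 * real l - 1) * pi"
    unfolding LW_interval_def a_def b_def by auto
next
  fix k k'
  assume "k \<in> LW_interval L l \<and> counting_fun Lam k = (2 * real l - 1) * pi"
    and "k' \<in> LW_interval L l \<and> counting_fun Lam k' = (2 * real l - 1) * pi"
  then have "counting_fun Lam k = counting_fun Lam k'" by simp
  then show "k = k'" using strict_mono_eq[OF strict_mono_counting_fun] by blast
qed

definition momentum :: "nat \<Rightarrow> real \<Rightarrow> real" where
  "momentum l Lam =
     (THE k. k \<in> LW_interval L l \<and> counting_fun Lam k = (2 * real l - 1) * pi)"

lemma momentum_in_LW_interval: "momentum l Lam \<in> LW_interval L l"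
  and counting_fun_momentum: "counting_fun Lam (momentum l Lam) = (2 * real l - 1) * pi"
  using theI'[OF ex1_counting_fun_in_LW_interval] unfolding momentum_def by blast+

lemma momentum_unique:
  "k \<in> LW_interval L l \<Longrightarrow> counting_fun Lam k = (2 * real l - 1) * pi
     \<Longrightarrow> momentum l Lam = k"
  unfolding momentum_def by (rule the1_equality[OF ex1_counting_fun_in_LW_interval]) simp

lemma odd_multiple_in_LW_interval:
  assumes "k \<in> LW_interval L l" and "counting_fun Lam k = (2 * of_int m + 1) * pi"
  shows "m = int l - 1"
proof -
  have "k * real L - pi < (2 * of_int m + 1) * pi"
    and "(2 * of_int m + 1) * pi < k * real L + pi"
    using counting_fun_bounds[where k=k and Lam=Lam] assms(2) by simp_all
  then have "(real l - 1) * (2 * pi) - pi < (2 * of_int m + 1) * pi"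
    "(2 * of_int m + 1) * pi < real l * (2 * pi) + pi"
    using assms(1) unfolding mem_LW_interval_iff by linarith+
  then have "(real l - 2) * pi < of_int m * pi" "of_int m * pi < real l * pi"
    by (simp_all add: algebra_simps)
  then have "real l - 2 < of_int m" "of_int m < real l" by simp_all
  then show ?thesis by linarith
qed

lemma LW_equation_iff_momentum:
  assumes "k \<in> LW_interval L l"
  shows "exp (\<i> * complex_of_real (k * real L)) = LW_factor U Lam k
           \<longleftrightarrow> k = momentum l Lam"
proof
  assume "exp (\<i> * complex_of_real (k * real L)) = LW_factor U Lam k"
  then obtain m :: int where m: "counting_fun Lam k = (2 * of_int m + 1) * pi"
    unfolding LW_equation_iff by blast
  then have "m = int l - 1" using odd_multiple_in_LW_interval assms by blast
  then show "k = momentum l Lam" using m momentum_unique[OF assms] by simp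
next
  assume "k = momentum l Lam"
  then have "counting_fun Lam k = (2 * of_int (int l - 1) + 1) * pi"
    using counting_fun_momentum by simp
  then show "exp (\<i> * complex_of_real (k * real L)) = LW_factor U Lam k"
    unfolding LW_equation_iff by blast
qed

lemma momentum_strict_bounds:
  "(real l - 1) * (2 * pi) < momentum l Lam * real L"
  "momentum l Lam * real L < real l * (2 * pi)"
  using counting_fun_bounds[where k="momentum l Lam" and Lam=Lam] counting_fun_momentum[of Lam l]
  by (simp_all add: algebra_simps)

lemma momentum_range:
  assumes "l \<in> {1..L}"
  shows "momentum l Lam \<in> {0..<2 * pi}"
proof -
  have "0 \<le> (real l - 1) * (2 * pi)" and "real l * (2 * pi) \<le> 2 * pi * real L"
    using assms by auto
  then have "0 < momentum l Lam * real L" "momentum l Lam * real L < 2 * pi * real L"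
    using momentum_strict_bounds[of l Lam] by linarith+
  then show ?thesis using L_pos by (simp add: zero_less_mult_iff)
qed

lemma inj_momentum: "inj (\<lambda>l. momentum l Lam)"
proof (rule injI)
  fix l l' assume "momentum l Lam = momentum l' Lam"
  then have "(2 * real l - 1) * pi = (2 * real l' - 1) * pi"
    using counting_fun_momentum by metis
  then show "l = l'" by simp
qed

lemma strict_mono_momentum: "strict_mono (momentum l)"
proof (rule strict_monoI, rule ccontr)
  fix Lam1 Lam2 :: real
  assume "Lam1 < Lam2" and "\<not> momentum l Lam1 < momentum l Lam2"
  then have "counting_fun Lam2 (momentum l Lam2) \<le> counting_fun Lam2 (momentum l Lam1)"
    using strict_mono_counting_fun by (simp add: strict_mono_less_eq)
  also have "\<dots> < counting_fun Lam1 (momentum l Lam1)"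
    using \<open>Lam1 < Lam2\<close> by (rule counting_fun_antimono)
  finally show False by (simp add: counting_fun_momentum)
qed

definition rapidity :: "nat \<Rightarrow> real \<Rightarrow> real" where
  "rapidity l k = sin k + U / 4 * tan ((k * real L - (2 * real l - 1) * pi) / 2)"

lemma momentum_rapidity:
  assumes "(real l - 1) * (2 * pi) < k * real L" "k * real L < real l * (2 * pi)"
  shows "momentum l (rapidity l k) = k"
proof (rule momentum_unique)
  show "k \<in> LW_interval L l" using assms unfolding mem_LW_interval_iff by simp
  have "\<bar>k * real L - (2 * real l - 1) * pi\<bar> < pi"
    using assms by (simp add: algebra_simps abs_less_iff)
  then have "phase (U / 4 * tan ((k * real L - (2 * real l - 1) * pi) / 2))
      = k * real L - (2 * real l - 1) * pi"
    by (rule phase_tan)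
  then show "counting_fun (rapidity l k) k = (2 * real l - 1) * pi"
    unfolding counting_fun_def rapidity_def by simp
qed

lemma rapidity_momentum: "rapidity l (momentum l Lam) = Lam"
proof -
  define k where "k = momentum l Lam"
  have "\<bar>phase (Lam - sin k)\<bar> < pi"
    unfolding abs_less_iff using phase_bounds[of "Lam - sin k"] by linarith
  moreover have "k * real L - (2 * real l - 1) * pi = phase (Lam - sin k)"
    using counting_fun_momentum[of Lam l] unfolding counting_fun_def k_def by simp
  ultimately show ?thesis
    unfolding rapidity_def k_def[symmetric] phase_def using U_pos
    by (simp add: tan_arctan field_simps)
qed

lemma isCont_rapidity:
  assumes "(real l - 1) * (2 * pi) < k * real L" "k * real L < real l * (2 * pi)"
  shows "isCont (rapidity l) k"
proof -
  have "cos ((k * real L - (2 * real l - 1) * pi) / 2) > 0"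
    using assms by (intro cos_gt_zero_pi) (simp_all add: algebra_simps)
  then show ?thesis unfolding rapidity_def by (intro continuous_intros) auto
qed

lemma isCont_momentum: "isCont (momentum l) Lam"
proof -
  define k where "k = momentum l Lam"
  define a b where "a = (real l - 1) * (2 * pi) / real L" and "b = real l * (2 * pi) / real L"
  have ab_iff: "(real l - 1) * (2 * pi) < x * real L \<and> x * real L < real l * (2 * pi)
      \<longleftrightarrow> a < x \<and> x < b" for x
    unfolding a_def b_def using L_pos by (simp add: pos_divide_less_eq pos_less_divide_eq)
  have "a < k" "k < b" using ab_iff momentum_strict_bounds unfolding k_def by blast+
  have "isCont (momentum l) (rapidity l k)"
  proof (rule isCont_inverse_function2[where f = "rapidity l"])
    show "(a + k) / 2 < k" "k < (k + b) / 2" using \<open>a < k\<close> \<open>k < b\<close> by simp_all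
    fix z assume "(a + k) / 2 \<le> z" "z \<le> (k + b) / 2"
    then have "a < z \<and> z < b" using \<open>a < k\<close> \<open>k < b\<close> by simp
    then show "momentum l (rapidity l z) = z" "isCont (rapidity l) z"
      using momentum_rapidity isCont_rapidity ab_iff by blast+
  qed
  then show ?thesis unfolding k_def rapidity_momentum .
qed

definition scaled_total_momentum :: "nat set \<Rightarrow> real \<Rightarrow> real" where
  "scaled_total_momentum S Lam = real L / (2 * pi) * (\<Sum>l\<in>S. momentum l Lam)"

lemma scaled_total_momentum_eq:
  "scaled_total_momentum S Lam = (\<Sum>l\<in>S. real l) - real (card S) / 2
     + (\<Sum>l\<in>S. phase (Lam - sin (momentum l Lam))) / (2 * pi)"
proof -
  have "real L * momentum l Lam / (2 * pi)
      = real l - 1 / 2 + phase (Lam - sin (momentum l Lam)) / (2 * pi)" for l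
    using counting_fun_momentum[of Lam l] unfolding counting_fun_def by (simp add: field_simps)
  then show ?thesis
    unfolding scaled_total_momentum_def sum_distrib_left
    by (simp add: sum.distrib sum_divide_distrib sum_subtractf)
qed

lemma strict_mono_scaled_total_momentum:
  assumes "finite S" "S \<noteq> {}"
  shows "strict_mono (scaled_total_momentum S)"
proof (rule strict_monoI)
  fix Lam1 Lam2 :: real assume "Lam1 < Lam2"
  then have "(\<Sum>l\<in>S. momentum l Lam1) < (\<Sum>l\<in>S. momentum l Lam2)"
    using assms strict_mono_momentum by (intro sum_strict_mono) (auto dest: strict_monoD)
  then show "scaled_total_momentum S Lam1 < scaled_total_momentum S Lam2"
    unfolding scaled_total_momentum_def using L_pos
    by (intro divide_strict_right_mono mult_strict_left_mono) auto
qed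

lemma isCont_scaled_total_momentum: "isCont (scaled_total_momentum S) Lam"
  unfolding scaled_total_momentum_def by (intro continuous_intros isCont_momentum)

lemma scaled_total_momentum_bounds:
  assumes "finite S" "S \<noteq> {}"
  shows "(\<Sum>l\<in>S. real l) - real (card S) < scaled_total_momentum S Lam"
    and "scaled_total_momentum S Lam < (\<Sum>l\<in>S. real l)"
proof -
  have "- (real (card S) * pi) < (\<Sum>l\<in>S. phase (Lam - sin (momentum l Lam)))"
    and "(\<Sum>l\<in>S. phase (Lam - sin (momentum l Lam))) < real (card S) * pi"
    using sum_strict_mono[OF assms, of "\<lambda>_. - pi"] sum_strict_mono[OF assms, of _ "\<lambda>_. pi"]
      phase_bounds
    by auto
  then show "(\<Sum>l\<in>S. real l) - real (card S) < scaled_total_momentum S Lam"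
    and "scaled_total_momentum S Lam < (\<Sum>l\<in>S. real l)"
    unfolding scaled_total_momentum_eq by (simp_all add: field_simps)
qed

lemma scaled_total_momentum_bracket:
  "scaled_total_momentum S (x - 1)
     \<le> (\<Sum>l\<in>S. real l) - real (card S) / 2 + real (card S) * phase x / (2 * pi)"
  "(\<Sum>l\<in>S. real l) - real (card S) / 2 + real (card S) * phase x / (2 * pi)
     \<le> scaled_total_momentum S (x + 1)"
proof -
  have "(\<Sum>l\<in>S. phase (x - 1 - sin (momentum l (x - 1)))) \<le> real (card S) * phase x"
    and "real (card S) * phase x \<le> (\<Sum>l\<in>S. phase (x + 1 - sin (momentum l (x + 1))))"
    using sum_mono[of S "\<lambda>l. phase (x - 1 - sin (momentum l (x - 1)))" "\<lambda>_. phase x"]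
      sum_mono[of S "\<lambda>_. phase x" "\<lambda>l. phase (x + 1 - sin (momentum l (x + 1)))"]
      strict_mono_phase[THEN strict_mono_mono] sin_le_one sin_ge_minus_one
    by (auto simp: mono_def)
  then show "scaled_total_momentum S (x - 1)
      \<le> (\<Sum>l\<in>S. real l) - real (card S) / 2 + real (card S) * phase x / (2 * pi)"
    and "(\<Sum>l\<in>S. real l) - real (card S) / 2 + real (card S) * phase x / (2 * pi)
      \<le> scaled_total_momentum S (x + 1)"
    unfolding scaled_total_momentum_eq by (simp_all add: divide_right_mono)
qed

lemma range_scaled_total_momentum:
  assumes "finite S" "S \<noteq> {}"
  shows "range (scaled_total_momentum S)
           = {(\<Sum>l\<in>S. real l) - real (card S) <..< (\<Sum>l\<in>S. real l)}"
proof (intro equalityI subsetI)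
  fix y assume "y \<in> range (scaled_total_momentum S)"
  then show "y \<in> {(\<Sum>l\<in>S. real l) - real (card S) <..< (\<Sum>l\<in>S. real l)}"
    using scaled_total_momentum_bounds[OF assms] by auto
next
  fix y assume "y \<in> {(\<Sum>l\<in>S. real l) - real (card S) <..< (\<Sum>l\<in>S. real l)}"
  define n where "n = real (card S)"
  have "0 < n" unfolding n_def using assms by (simp add: card_gt_0_iff)
  define v where "v = 2 * pi * (y - (\<Sum>l\<in>S. real l) + n / 2) / n"
  have "\<bar>y - (\<Sum>l\<in>S. real l) + n / 2\<bar> < n / 2"
    using \<open>y \<in> _\<close> unfolding abs_less_iff n_def by auto
  have "\<bar>v\<bar> = 2 * pi * \<bar>y - (\<Sum>l\<in>S. real l) + n / 2\<bar> / n"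
    unfolding v_def using \<open>0 < n\<close> by (simp add: abs_mult)
  also have "\<dots> < 2 * pi * (n / 2) / n"
    using \<open>\<bar>y - (\<Sum>l\<in>S. real l) + n / 2\<bar> < n / 2\<close> \<open>0 < n\<close>
    by (intro divide_strict_right_mono mult_strict_left_mono) auto
  finally have "\<bar>v\<bar> < pi" using \<open>0 < n\<close> by simp
  define x where "x = U / 4 * tan (v / 2)"
  have "phase x = v" unfolding x_def using \<open>\<bar>v\<bar> < pi\<close> by (rule phase_tan)
  then have "y = (\<Sum>l\<in>S. real l) - n / 2 + n * phase x / (2 * pi)"
    unfolding v_def using \<open>0 < n\<close> by (simp add: field_simps)
  then have "scaled_total_momentum S (x - 1) \<le> y" "y \<le> scaled_total_momentum S (x + 1)"
    using scaled_total_momentum_bracket[of S x] unfolding n_def by simp_all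
  moreover have "continuous_on {x - 1..x + 1} (scaled_total_momentum S)"
    by (intro continuous_at_imp_continuous_on ballI isCont_scaled_total_momentum)
  ultimately obtain Lam where "scaled_total_momentum S Lam = y"
    using IVT'[of "scaled_total_momentum S" "x - 1" y "x + 1"] by auto
  then show "y \<in> range (scaled_total_momentum S)" by blast
qed

definition rapidities :: "nat set \<Rightarrow> real set" where
  "rapidities S = {Lam. scaled_total_momentum S Lam \<in> \<int>}"

lemma card_rapidities:
  assumes "finite S" "S \<noteq> {}"
  shows "finite (rapidities S) \<and> card (rapidities S) = card S - 1"
proof -
  have "range (scaled_total_momentum S)
      = {of_int ((\<Sum>l\<in>S. int l) - int (card S)) <..< of_int (\<Sum>l\<in>S. int l)}"
    using range_scaled_total_momentum[OF assms] by simp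
  from card_Ints_preimage[OF _ this] show ?thesis
    using strict_mono_scaled_total_momentum[OF assms] unfolding rapidities_def
    by (simp add: strict_mono_imp_inj_on)
qed

lemma prod_LW_factor_eq_1_iff:
  assumes "finite K"
    and "\<forall>k\<in>K. exp (\<i> * complex_of_real (k * real L)) = LW_factor U Lam k"
  shows "(\<Prod>k\<in>K. LW_factor U Lam k) = 1 \<longleftrightarrow> real L / (2 * pi) * (\<Sum>k\<in>K. k) \<in> \<int>"
proof -
  have "(\<Prod>k\<in>K. LW_factor U Lam k)
      = (\<Prod>k\<in>K. exp (\<i> * complex_of_real (k * real L)))"
    using assms(2) by simp
  also have "\<dots> = exp (\<Sum>k\<in>K. \<i> * complex_of_real (k * real L))"
    using assms(1) by (simp add: exp_sum)
  also have "(\<Sum>k\<in>K. \<i> * complex_of_real (k * real L))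
      = \<i> * complex_of_real (real L * (\<Sum>k\<in>K. k))"
    by (simp add: sum_distrib_left sum_distrib_right mult.commute)
  finally show ?thesis by (simp only: exp_i_eq_1_iff_Ints) simp
qed

lemma prod_LW_factor_momenta_eq_1_iff:
  assumes "finite S"
  shows "(\<Prod>k\<in>(\<lambda>l. momentum l Lam) ` S. LW_factor U Lam k) = 1
           \<longleftrightarrow> Lam \<in> rapidities S"
proof -
  have "\<forall>k\<in>(\<lambda>l. momentum l Lam) ` S.
      exp (\<i> * complex_of_real (k * real L)) = LW_factor U Lam k"
    using LW_equation_iff_momentum momentum_in_LW_interval by blast
  moreover have "(\<Sum>k\<in>(\<lambda>l. momentum l Lam) ` S. k) = (\<Sum>l\<in>S. momentum l Lam)"
    by (simp add: sum.reindex inj_on_subset[OF inj_momentum])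
  ultimately show ?thesis using assms
    by (simp add: prod_LW_factor_eq_1_iff rapidities_def scaled_total_momentum_def)
qed

lemma LW_solutions_in_imp_momenta:
  assumes "(K, Lam) \<in> LW_solutions_in L N U S" and "finite S"
  shows "K = (\<lambda>l. momentum l Lam) ` S" and "Lam \<in> rapidities S"
proof -
  obtain f where sol: "(K, Lam) \<in> LW_solutions L N U"
    and f: "bij_betw f K S" "\<forall>k\<in>K. k \<in> LW_interval L (f k)"
    using assms(1) unfolding LW_solutions_in_def by auto
  have "k = momentum (f k) Lam" if "k \<in> K" for k
    using sol f(2) that LW_equation_iff_momentum unfolding LW_solutions_def by blast
  then have "K = (\<lambda>l. momentum l Lam) ` f ` K" by (auto simp: image_iff)
  then show K: "K = (\<lambda>l. momentum l Lam) ` S" using bij_betw_imp_surj_on[OF f(1)] by simp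
  then show "Lam \<in> rapidities S"
    using sol prod_LW_factor_momenta_eq_1_iff[OF assms(2)] unfolding LW_solutions_def by auto
qed

lemma momenta_mem_LW_solutions_in:
  assumes "S \<subseteq> {1..L}" and "card S = N" and "Lam \<in> rapidities S"
  shows "((\<lambda>l. momentum l Lam) ` S, Lam) \<in> LW_solutions_in L N U S"
proof -
  define K where "K = (\<lambda>l. momentum l Lam) ` S"
  have "finite S" using assms(1) finite_subset by blast
  have inj: "inj_on (\<lambda>l. momentum l Lam) S" using inj_momentum by (rule inj_on_subset) simp
  have "finite K" and "card K = N"
    using \<open>finite S\<close> assms(2) card_image[OF inj] unfolding K_def by simp_all
  moreover have "K \<subseteq> {0..<2 * pi}" using assms(1) momentum_range unfolding K_def by blast
  moreover have "\<forall>k\<in>K. exp (\<i> * complex_of_real (k * real L)) = LW_factor U Lam k"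
    using LW_equation_iff_momentum momentum_in_LW_interval unfolding K_def by blast
  moreover have "(\<Prod>k\<in>K. LW_factor U Lam k) = 1"
    using prod_LW_factor_momenta_eq_1_iff[OF \<open>finite S\<close>] assms(3) unfolding K_def by blast
  ultimately have "(K, Lam) \<in> LW_solutions L N U" unfolding LW_solutions_def by blast
  moreover have "bij_betw (the_inv_into S (\<lambda>l. momentum l Lam)) K S"
    unfolding K_def using inj by (intro bij_betw_the_inv_into inj_on_imp_bij_betw)
  moreover have "\<forall>k\<in>K. k \<in> LW_interval L (the_inv_into S (\<lambda>l. momentum l Lam) k)"
    unfolding K_def using the_inv_into_f_f[OF inj] by (auto simp: momentum_in_LW_interval)
  ultimately show ?thesis unfolding K_def[symmetric] LW_solutions_in_def by blast
qed

lemma LW_solutions_in_eq: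
  assumes "S \<subseteq> {1..L}" and "card S = N"
  shows "LW_solutions_in L N U S = (\<lambda>Lam. ((\<lambda>l. momentum l Lam) ` S, Lam)) ` rapidities S"
proof (intro equalityI subsetI)
  fix p assume p: "p \<in> LW_solutions_in L N U S"
  obtain K Lam where "p = (K, Lam)" by (cases p)
  moreover have "finite S" using assms(1) finite_subset by blast
  ultimately show "p \<in> (\<lambda>Lam. ((\<lambda>l. momentum l Lam) ` S, Lam)) ` rapidities S"
    using p LW_solutions_in_imp_momenta by blast
qed (use assms momenta_mem_LW_solutions_in in blast)

lemma LW_solutions_in_finite_card:
  assumes "S \<subseteq> {1..L}" and "card S = N" and "0 < N"
  shows "finite (LW_solutions_in L N U S) \<and> card (LW_solutions_in L N U S) = N - 1
           \<and> card (snd ` LW_solutions_in L N U S) = N - 1"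
proof -
  have "finite S" "S \<noteq> {}" using assms finite_subset by auto
  moreover have "inj_on (\<lambda>Lam. ((\<lambda>l. momentum l Lam) ` S, Lam)) (rapidities S)"
    by (rule inj_onI) simp
  ultimately show ?thesis
    unfolding LW_solutions_in_eq[OF assms(1,2)] using card_rapidities assms(2)
    by (simp add: card_image image_image)
qed

lemma ex_LW_interval:
  assumes "k \<in> {0..<2 * pi}"
  shows "\<exists>l\<in>{1..L}. k \<in> LW_interval L l"
proof
  define j where "j = \<lfloor>k * real L / (2 * pi)\<rfloor>"
  have "0 \<le> k * real L / (2 * pi)" "k * real L / (2 * pi) < real L"
    using assms L_pos by (simp_all add: divide_less_eq)
  then have "0 \<le> j" "j < int L" unfolding j_def by linarith+
  then show "nat j + 1 \<in> {1..L}" by simp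
  have "of_int j \<le> k * real L / (2 * pi)" "k * real L / (2 * pi) < of_int j + 1"
    unfolding j_def by linarith+
  then have "of_int j * (2 * pi) \<le> k * real L" "k * real L \<le> (1 + of_int j) * (2 * pi)"
    by (simp_all add: field_simps)
  then show "k \<in> LW_interval L (nat j + 1)"
    unfolding mem_LW_interval_iff using \<open>0 \<le> j\<close> by simp
qed

lemma LW_solutions_eq_UN:
  "LW_solutions L N U = (\<Union>S\<in>{S. S \<subseteq> {1..L} \<and> card S = N}. LW_solutions_in L N U S)"
proof (intro equalityI subsetI)
  fix p assume "p \<in> LW_solutions L N U"
  then obtain K Lam where p: "p = (K, Lam)" and sol: "(K, Lam) \<in> LW_solutions L N U"
    by (cases p) auto
  then have "\<forall>k\<in>K. \<exists>l\<in>{1..L}. k \<in> LW_interval L l"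
    using ex_LW_interval unfolding LW_solutions_def by blast
  then obtain f where f: "\<forall>k\<in>K. f k \<in> {1..L} \<and> k \<in> LW_interval L (f k)" by metis
  have "k = momentum (f k) Lam" if "k \<in> K" for k
    using sol f that LW_equation_iff_momentum unfolding LW_solutions_def by blast
  then have "inj_on f K" by (metis inj_onI)
  then have "bij_betw f K (f ` K)" and "card (f ` K) = N"
    using sol by (simp_all add: inj_on_imp_bij_betw card_image LW_solutions_def)
  moreover have "f ` K \<subseteq> {1..L}" using f by blast
  ultimately show "p \<in> (\<Union>S\<in>{S. S \<subseteq> {1..L} \<and> card S = N}. LW_solutions_in L N U S)"
    using sol f unfolding p LW_solutions_in_def by blast
qed (auto simp: LW_solutions_in_def)

lemma LW_solutions_in_disjoint:
  assumes "S \<subseteq> {1..L}" "card S = N" "S' \<subseteq> {1..L}" "card S' = N" and "S \<noteq> S'"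
  shows "LW_solutions_in L N U S \<inter> LW_solutions_in L N U S' = {}"
proof -
  have "(\<lambda>l. momentum l Lam) ` S \<noteq> (\<lambda>l. momentum l Lam) ` S'" for Lam
    using assms(5) inj_momentum by (simp add: inj_image_eq_iff)
  then show ?thesis
    unfolding LW_solutions_in_eq[OF assms(1,2)] LW_solutions_in_eq[OF assms(3,4)] by auto
qed

end

theorem mainTheorem2:
  fixes L N :: nat and U :: real
  assumes "0 < N" and "N \<le> L" and "0 < U" and "real L > 8 / U"
  shows "finite (LW_solutions L N U) \<and>
         card (LW_solutions L N U) = (L choose N) * (N - 1) \<and>
         (\<forall>S. S \<subseteq> {1..L} \<and> card S = N \<longrightarrow>
              finite (LW_solutions_in L N U S) \<and>
              card (LW_solutions_in L N U S) = N - 1 \<and>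
              card (snd ` LW_solutions_in L N U S) = N - 1)"
proof -
  interpret lieb_wu L U using assms(3,4) by unfold_locales
  define \<S> where "\<S> = {S. S \<subseteq> {1..L} \<and> card S = N}"
  have per_S: "finite (LW_solutions_in L N U S) \<and> card (LW_solutions_in L N U S) = N - 1
      \<and> card (snd ` LW_solutions_in L N U S) = N - 1" if "S \<in> \<S>" for S
    using LW_solutions_in_finite_card assms(1) that unfolding \<S>_def by blast
  have "finite \<S>" unfolding \<S>_def by (rule finite_subset[of _ "Pow {1..L}"]) auto
  have "LW_solutions L N U = (\<Union>S\<in>\<S>. LW_solutions_in L N U S)"
    unfolding \<S>_def by (rule LW_solutions_eq_UN)
  moreover have "card (\<Union>S\<in>\<S>. LW_solutions_in L N U S)
      = (\<Sum>S\<in>\<S>. card (LW_solutions_in L N U S))"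
    using \<open>finite \<S>\<close> per_S LW_solutions_in_disjoint
    by (intro card_UN_disjoint) (auto simp: \<S>_def)
  moreover have "(\<Sum>S\<in>\<S>. card (LW_solutions_in L N U S)) = (L choose N) * (N - 1)"
    using per_S n_subsets[of "{1..L}" N] unfolding \<S>_def by simp
  ultimately show ?thesis using \<open>finite \<S>\<close> per_S unfolding \<S>_def by auto
qed

end
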